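(* Let $(K,\mathrm{val})$ be a $2$-henselian valued field whose residue class field $F$ has characteristic $\neq2$, let $A$ be a subring with $B\subseteq A\subseteq K$ and $H=\mathrm{val}(A^\times)$. Let $(M_g)_{g\in H\cup G_{\ge e}}$ be a family of quasi-quadratic modules in $F$ such that $M_g\subseteq M_h$ whenever either (i) $g\le h$ and $\overline g=\overline h$, or (ii) $M_g=F$ and ($[g]=[h]$ or $g\le h$). Then $\bigcup_{g\in H\cup G_{\ge e}}\Phi^A(M_g,[\![g]\!])$ is a quasi-quadratic module in $A$.
   Context: Let $(G,\le)$ be a totally ordered abelian group written multiplicatively with identity $e$; $G_{\ge e}=\{g\in G:g\ge e\}$, $G^2=\{g^2:g\in G\}$. Let $(K,\mathrm{val})$ be a valued field with surjective valuation $\mathrm{val}:K\to G\cup\{\infty\}$, valuation ring $B=\{x:\mathrm{val}(x)\ge e\}$, residue map $\pi:B\to F$, residue field $F$. A strict unit is $x\in B^\times$ with $\pi(x)=1$; when $\mathrm{char}F\ne2$, $2$-henselian is equivalent to every strict unit being a square in $K$. For a subring $A$ with $B\subseteq A\subseteq K$ put $H=\mathrm{val}(A^\times)$; $H$ is a convex subgroup of $G$ and $\mathrm{val}(A\setminus\{0\})=H\cup G_{\ge e}$. For $g\in G$: $\overline g$ is its class in $G/G^2$, $[\![g]\!]$ its class in $G/H^2$, $[g]$ its class in $G/H$; "$\mathrm{val}(x)=\overline g$" means $\overline{\mathrm{val}(x)}=\overline g$, similarly for $[\![\cdot]\!]$. A quasi-quadratic module in a commutative ring $R$ is a subset $M\subseteq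 R$ with $M+M\subseteq M$ and $a^2M\subseteq M$ for all $a\in R$. A pseudo-angular component map is a map $\mathrm{p.an}:K^\times\to F^\times$ such that: (1) $\mathrm{p.an}(u)=\pi(u)$ for $u\in B^\times$; (2) $\mathrm{p.an}(ux)=\pi(u)\mathrm{p.an}(x)$ for $u\in B^\times,x\in K^\times$; (3) for all $g\in G$, $c\in F^\times$ there is $w\in K$ with $\mathrm{val}(w)=g$, $\mathrm{p.an}(w)=c$; (4) for nonzero $x_1,x_2$ with $x_1+x_2\ne0$: if $\mathrm{val}(x_1)<\mathrm{val}(x_2)$ then $\mathrm{p.an}(x_1+x_2)=\mathrm{p.an}(x_1)$; if $\mathrm{val}(x_1)=\mathrm{val}(x_2)$ and $\mathrm{p.an}(x_1)+\mathrm{p.an}(x_2)\ne0$ then $\mathrm{val}(x_1+x_2)=\mathrm{val}(x_1)$ and $\mathrm{p.an}(x_1+x_2)=\mathrm{p.an}(x_1)+\mathrm{p.an}(x_2)$; (5) if $x,y\in K^\times$, $\overline{\mathrm{val}(x)}=\overline{\mathrm{val}(y)}$ and $\mathrm{p.an}(x)=\mathrm{p.an}(y)$ then $y=u^2x$ for some $u\in K^\times$; (6) for $a,u\in K^\times$ there is $k\in F^\times$ with $\mathrm{p.an}(au^2)=\mathrm{p.an}(a)k^2$. Such a map exists under the hypotheses; fix one. For $g\in G$ and a quasi-quadratic module $M$ in $F$: $$\Phi^A(M,[\![g]\!])=\{x\in A\setminus\{0\}:\ \mathrm{val}(x)=\overline g,\ (\mathrm{val}(x)=[\![g]\!]\ \text{or}\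 \mathrm{val}(x)>g),\ \mathrm{p.an}(x)\in M\}\cup\{0\}.$$ *)

theory Defs
  imports Main
begin

text \<open>Totally ordered abelian group G is written additively (type class
linordered_ab_group_add); identity e is 0.  The valuation is a map on K
whose values at 0 are irrelevant (val 0 = infinity is encoded by x = 0).\<close>

definition valuation :: "('k::field \<Rightarrow> 'g::linordered_ab_group_add) \<Rightarrow> bool" where
  "valuation v \<longleftrightarrow>
     (\<forall>x y. x \<noteq> 0 \<longrightarrow> y \<noteq> 0 \<longrightarrow> v (x * y) = v x + v y) \<and>
     (\<forall>x y. x \<noteq> 0 \<longrightarrow> y \<noteq> 0 \<longrightarrow> x + y \<noteq> 0 \<longrightarrow> min (v x) (v y) \<le> v (x + y)) \<and>
     v ` {x. x \<noteq> 0} = UNIV"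

definition valring :: "('k::field \<Rightarrow> 'g::linordered_ab_group_add) \<Rightarrow> 'k set" where
  "valring v = {x. x = 0 \<or> 0 \<le> v x}"

definition valunits :: "('k::field \<Rightarrow> 'g::linordered_ab_group_add) \<Rightarrow> 'k set" where
  "valunits v = {x. x \<noteq> 0 \<and> v x = 0}"

definition residue_map :: "('k::field \<Rightarrow> 'g::linordered_ab_group_add) \<Rightarrow> ('k \<Rightarrow> 'f::field) \<Rightarrow> bool" where
  "residue_map v res \<longleftrightarrow>
     (\<forall>x\<in>valring v. \<forall>y\<in>valring v. res (x + y) = res x + res y \<and> res (x * y) = res x * res y) \<and>
     res 1 = 1 \<and>
     res ` valring v = UNIV \<and>
     (\<forall>x\<in>valring v. res x = 0 \<longleftrightarrow> (x = 0 \<or> 0 < v x))"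

definition strict_unit :: "('k::field \<Rightarrow> 'g::linordered_ab_group_add) \<Rightarrow> ('k \<Rightarrow> 'f::field) \<Rightarrow> 'k \<Rightarrow> bool" where
  "strict_unit v res x \<longleftrightarrow> x \<in> valunits v \<and> res x = 1"

text \<open>2-henselian, in the form valid when char F \<noteq> 2.\<close>
definition two_henselian :: "('k::field \<Rightarrow> 'g::linordered_ab_group_add) \<Rightarrow> ('k \<Rightarrow> 'f::field) \<Rightarrow> bool" where
  "two_henselian v res \<longleftrightarrow> (\<forall>x. strict_unit v res x \<longrightarrow> (\<exists>y. x = y\<^sup>2))"

definition subring_between :: "('k::field \<Rightarrow> 'g::linordered_ab_group_add) \<Rightarrow> 'k set \<Rightarrow> bool" where
  "subring_between v A \<longleftrightarrow>
     valring v \<subseteq> A \<and> 0 \<in> A \<and> 1 \<in> A \<and>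
     (\<forall>x\<in>A. \<forall>y\<in>A. x + y \<in> A \<and> x * y \<in> A \<and> - x \<in> A)"

definition Hgrp :: "('k::field \<Rightarrow> 'g::linordered_ab_group_add) \<Rightarrow> 'k set \<Rightarrow> 'g set" where
  "Hgrp v A = v ` {x\<in>A. x \<noteq> 0 \<and> inverse x \<in> A}"

definition qqm :: "'a::comm_ring_1 set \<Rightarrow> 'a set \<Rightarrow> bool" where
  "qqm R M \<longleftrightarrow> M \<subseteq> R \<and> (\<forall>x\<in>M. \<forall>y\<in>M. x + y \<in> M) \<and> (\<forall>a\<in>R. \<forall>x\<in>M. a\<^sup>2 * x \<in> M)"

definition eq_mod_sq :: "'g::linordered_ab_group_add \<Rightarrow> 'g \<Rightarrow> bool" where
  "eq_mod_sq g h \<longleftrightarrow> (\<exists>k. g - h = k + k)"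

definition eq_mod_Hsq :: "'g set \<Rightarrow> 'g::linordered_ab_group_add \<Rightarrow> 'g \<Rightarrow> bool" where
  "eq_mod_Hsq H g h \<longleftrightarrow> (\<exists>k\<in>H. g - h = k + k)"

definition eq_mod_H :: "'g set \<Rightarrow> 'g::linordered_ab_group_add \<Rightarrow> 'g \<Rightarrow> bool" where
  "eq_mod_H H g h \<longleftrightarrow> g - h \<in> H"

definition pseudo_ac :: "('k::field \<Rightarrow> 'g::linordered_ab_group_add) \<Rightarrow> ('k \<Rightarrow> 'f::field) \<Rightarrow> ('k \<Rightarrow> 'f) \<Rightarrow> bool" where
  "pseudo_ac v res pan \<longleftrightarrow>
     (\<forall>x. x \<noteq> 0 \<longrightarrow> pan x \<noteq> 0) \<and>
     (\<forall>u\<in>valunits v. pan u = res u) \<and>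
     (\<forall>u\<in>valunits v. \<forall>x. x \<noteq> 0 \<longrightarrow> pan (u * x) = res u * pan x) \<and>
     (\<forall>g c. c \<noteq> 0 \<longrightarrow> (\<exists>w. w \<noteq> 0 \<and> v w = g \<and> pan w = c)) \<and>
     (\<forall>x1 x2. x1 \<noteq> 0 \<longrightarrow> x2 \<noteq> 0 \<longrightarrow> x1 + x2 \<noteq> 0 \<longrightarrow>
        (v x1 < v x2 \<longrightarrow> pan (x1 + x2) = pan x1) \<and>
        (v x1 = v x2 \<longrightarrow> pan x1 + pan x2 \<noteq> 0 \<longrightarrow>
           v (x1 + x2) = v x1 \<and> pan (x1 + x2) = pan x1 + pan x2)) \<and>
     (\<forall>x y. x \<noteq> 0 \<longrightarrow> y \<noteq> 0 \<longrightarrow> eq_mod_sq (v x) (v y) \<longrightarrow> pan x = pan y \<longrightarrow>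
        (\<exists>u. u \<noteq> 0 \<and> y = u\<^sup>2 * x)) \<and>
     (\<forall>a u. a \<noteq> 0 \<longrightarrow> u \<noteq> 0 \<longrightarrow> (\<exists>k. k \<noteq> 0 \<and> pan (a * u\<^sup>2) = pan a * k\<^sup>2))"

definition Phi :: "('k::field \<Rightarrow> 'g::linordered_ab_group_add) \<Rightarrow> ('k \<Rightarrow> 'f::field) \<Rightarrow> 'k set \<Rightarrow> 'f set \<Rightarrow> 'g \<Rightarrow> 'k set" where
  "Phi v pan A M g =
     {x\<in>A. x \<noteq> 0 \<and> eq_mod_sq (v x) g \<and> (eq_mod_Hsq (Hgrp v A) (v x) g \<or> g < v x) \<and> pan x \<in> M}
     \<union> {0}"

end

theory Submission
  imports Defs
begin

text \<open>Write \<open>\<Phi>\<^sub>g\<close> for \<open>\<Phi>\<^sup>A(M\<^sub>g, [[g]])\<close>. Multiplying \<open>x \<in> \<Phi>\<^sub>g\<close> by \<open>a\<^sup>2\<close> changes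
\<open>pan x\<close> by a square factor (axiom 6) and shifts \<open>val x\<close> by \<open>2 val a\<close>; convexity of \<open>H\<close>
keeps the valuation condition intact. For a sum \<open>x + y\<close> of \<open>x \<in> \<Phi>\<^sub>g\<close>, \<open>y \<in> \<Phi>\<^sub>h\<close> with
\<open>val x \<le> val y\<close>: if \<open>val x < val y\<close>, or the angular components do not cancel, then
\<open>x + y\<close> lies in \<open>\<Phi>\<^sub>g\<close> or \<open>\<Phi>\<^sub>h\<close> after enlarging \<open>M\<^sub>g\<close> to \<open>M\<^sub>h\<close> by rule (i). If they cancel,
then \<open>M\<^sub>h\<close> contains \<open>\<plusminus>pan x\<close> and hence is all of \<open>F\<close>; axiom 5 writes \<open>y = -u\<^sup>2x\<close> with
\<open>\<pi>(u\<^sup>2) = 1\<close>, so \<open>val(x + y) > val x\<close>, and rule (ii) moves \<open>x + y\<close> into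
\<open>\<Phi>\<^bsub>val(x+y)\<^esub>\<close>.\<close>

lemma eq_mod_sq_refl: "eq_mod_sq g g"
  unfolding eq_mod_sq_def by (intro exI[of _ 0]) simp

lemma eq_mod_sq_sym: "eq_mod_sq g h \<Longrightarrow> eq_mod_sq h g"
  unfolding eq_mod_sq_def by (metis minus_add_distrib minus_diff_eq)

lemma eq_mod_sq_trans: "eq_mod_sq g h \<Longrightarrow> eq_mod_sq h l \<Longrightarrow> eq_mod_sq g l"
proof -
  assume "eq_mod_sq g h" "eq_mod_sq h l"
  then obtain k m where "g - h = k + k" "h - l = m + m" unfolding eq_mod_sq_def by blast
  then have "g - l = (k + m) + (k + m)" by (simp add: algebra_simps)
  then show "eq_mod_sq g l" unfolding eq_mod_sq_def by blast
qed

lemma qqm_UNIV_eq_UNIV_if_uminus_mem: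
  fixes M :: "'f::field set"
  assumes M: "qqm UNIV M" and two: "(2::'f) \<noteq> 0"
    and t: "t \<in> M" "- t \<in> M" "t \<noteq> 0"
  shows "M = UNIV"
proof -
  have "c \<in> M" for c
  proof -
    define a b where "a = (1 + c / t) / 2" and "b = (1 - c / t) / 2"
    have "a + b = 1" "a - b = c / t"
      using two unfolding a_def b_def by (simp_all add: add_divide_distrib[symmetric] diff_divide_distrib[symmetric])
    have "a\<^sup>2 * t + b\<^sup>2 * (- t) = (a + b) * (a - b) * t"
      by (simp add: power2_eq_square algebra_simps)
    also have "\<dots> = c" using \<open>a + b = 1\<close> \<open>a - b = c / t\<close> t(3) by simp
    finally have "a\<^sup>2 * t + b\<^sup>2 * (- t) = c" .
    moreover have "a\<^sup>2 * t + b\<^sup>2 * (- t) \<in> M" using M t unfolding qqm_def by blast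
    ultimately show "c \<in> M" by simp
  qed
  then show ?thesis by blast
qed

lemma nonzero_mem_Phi_iff:
  "x \<noteq> 0 \<Longrightarrow> x \<in> Phi v pan A N g \<longleftrightarrow>
     x \<in> A \<and> eq_mod_sq (v x) g \<and> (eq_mod_Hsq (Hgrp v A) (v x) g \<or> g < v x) \<and> pan x \<in> N"
  unfolding Phi_def by auto

lemma zero_mem_Phi [simp]: "0 \<in> Phi v pan A N g"
  unfolding Phi_def by blast

locale valued_field =
  fixes v :: "'k::field \<Rightarrow> 'g::linordered_ab_group_add"
  assumes valuation: "valuation v"
begin

lemma valuation_mult: "x \<noteq> 0 \<Longrightarrow> y \<noteq> 0 \<Longrightarrow> v (x * y) = v x + v y"
  using valuation unfolding valuation_def by blast

lemma valuation_min_le_add: "x \<noteq> 0 \<Longrightarrow> y \<noteq> 0 \<Longrightarrow> x + y \<noteq> 0 \<Longrightarrow> min (v x) (v y) \<le> v (x + y)"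
  using valuation unfolding valuation_def by blast

lemma valuation_surj: obtains x where "x \<noteq> 0" "v x = g"
proof -
  have "g \<in> v ` {x. x \<noteq> 0}" using valuation unfolding valuation_def by blast
  then show ?thesis using that by blast
qed

lemma valuation_one [simp]: "v 1 = 0"
  using valuation_mult[of 1 1] by simp

lemma valuation_inverse: "x \<noteq> 0 \<Longrightarrow> v (inverse x) = - v x"
  using valuation_mult[of x "inverse x"] by (simp add: eq_neg_iff_add_eq_0 add.commute)

lemma valuation_minus_one [simp]: "v (- 1) = 0"
  using valuation_mult[of "- 1" "- 1"] by simp

lemma valuation_uminus [simp]: "v (- x) = v x"
  using valuation_mult[of "- 1" x] by (cases "x = 0") simp_all

lemma valuation_square: "x \<noteq> 0 \<Longrightarrow> v (x\<^sup>2) = v x + v x"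
  by (simp add: power2_eq_square valuation_mult)

lemma valuation_add_less:
  assumes "x \<noteq> 0" "y \<noteq> 0" "v x < v y"
  shows "x + y \<noteq> 0" "v (x + y) = v x"
proof -
  show sum: "x + y \<noteq> 0"
    using assms by (metis add.commute add_eq_0_iff valuation_uminus less_irrefl)
  have "min (v (x + y)) (v (- y)) \<le> v ((x + y) + - y)"
    using valuation_min_le_add[of "x + y" "- y"] sum assms by simp
  moreover have "min (v x) (v y) \<le> v (x + y)" using valuation_min_le_add sum assms by blast
  ultimately show "v (x + y) = v x" using assms by (simp add: min_def split: if_splits)
qed

lemma valring_diff: "x \<in> valring v \<Longrightarrow> y \<in> valring v \<Longrightarrow> x - y \<in> valring v"
  using valuation_min_le_add[of x "- y"] unfolding valring_def
  by (cases "x = 0"; cases "y = 0"; cases "x - y = 0") (auto intro: order_trans[OF min.boundedI])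

end

locale valuation_overring = valued_field v
  for v :: "'k::field \<Rightarrow> 'g::linordered_ab_group_add" +
  fixes A :: "'k set"
  assumes subring: "subring_between v A"
begin

abbreviation "H \<equiv> Hgrp v A"

lemma valring_subset: "valring v \<subseteq> A"
  using subring unfolding subring_between_def by blast

lemma overring_add: "x \<in> A \<Longrightarrow> y \<in> A \<Longrightarrow> x + y \<in> A"
  using subring unfolding subring_between_def by blast

lemma overring_mult: "x \<in> A \<Longrightarrow> y \<in> A \<Longrightarrow> x * y \<in> A"
  using subring unfolding subring_between_def by blast

lemma overring_zero: "0 \<in> A"
  using subring unfolding subring_between_def by blast

lemma zero_in_Hgrp: "0 \<in> H"
  using subring unfolding Hgrp_def subring_between_def by force

lemma Hgrp_uminus: "h \<in> H \<Longrightarrow> - h \<in> H"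
  unfolding Hgrp_def using valuation_inverse by (auto intro!: image_eqI[where x = "inverse _"])

lemma Hgrp_add: assumes "h \<in> H" "l \<in> H" shows "h + l \<in> H"
proof -
  obtain x y where "x \<in> A" "x \<noteq> 0" "inverse x \<in> A" "v x = h"
    "y \<in> A" "y \<noteq> 0" "inverse y \<in> A" "v y = l"
    using assms unfolding Hgrp_def by auto
  then show ?thesis unfolding Hgrp_def
    by (intro image_eqI[where x = "x * y"]) (auto simp: valuation_mult overring_mult mult.commute)
qed

lemma Hgrp_convex_nonneg:
  assumes "0 \<le> t" "t \<le> h" "h \<in> H"
  shows "t \<in> H"
proof -
  obtain y where y: "y \<in> A" "y \<noteq> 0" "inverse y \<in> A" "v y = h"
    using assms(3) unfolding Hgrp_def by auto
  obtain z where z: "z \<noteq> 0" "v z = t" using valuation_surj .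
  have "z \<in> A" using z assms valring_subset unfolding valring_def by auto
  have "v (y * inverse z) = h - t" using y z by (simp add: valuation_mult valuation_inverse)
  then have "y * inverse z \<in> A" using valring_subset assms unfolding valring_def by auto
  then have "inverse y * (y * inverse z) \<in> A" using overring_mult y by blast
  then have "inverse z \<in> A" using y by (simp add: mult.assoc[symmetric])
  with \<open>z \<in> A\<close> z show ?thesis unfolding Hgrp_def by auto
qed

lemma Hgrp_convex:
  assumes "l \<le> t" "t \<le> h" "l \<in> H" "h \<in> H"
  shows "t \<in> H"
proof (cases "0 \<le> t")
  case True
  then show ?thesis using Hgrp_convex_nonneg assms by blast
next
  case False
  then have "- t \<in> H" using Hgrp_convex_nonneg[of "- t" "- l"] Hgrp_uminus assms by simp
  then show ?thesis using Hgrp_uminus by fastforce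
qed

lemma Hgrp_half: "k + k \<in> H \<Longrightarrow> k \<in> H"
  using Hgrp_convex[of "min 0 (k + k)" k "max 0 (k + k)"] zero_in_Hgrp
  by (cases "0 \<le> k") (simp_all add: add_increasing add_decreasing min_def max_def)

lemma Hgrp_less_if_not_mem: "0 \<le> t \<Longrightarrow> t \<notin> H \<Longrightarrow> h \<in> H \<Longrightarrow> h < t"
  using Hgrp_convex_nonneg by (meson not_le)

lemma valuation_in_Hgrp_if_neg: "a \<in> A \<Longrightarrow> a \<noteq> 0 \<Longrightarrow> v a < 0 \<Longrightarrow> v a \<in> H"
  using valring_subset unfolding Hgrp_def valring_def
  by (intro image_eqI[of _ _ a]) (auto simp: valuation_inverse)

lemma valuation_overring_cases: "a \<in> A \<Longrightarrow> a \<noteq> 0 \<Longrightarrow> v a \<in> H \<or> 0 \<le> v a"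
  using valuation_in_Hgrp_if_neg by force

lemma Hsq_condition_shift:
  assumes t: "t \<in> H \<or> 0 \<le> t" and sq: "eq_mod_sq w g"
    and cond: "eq_mod_Hsq H w g \<or> g < w"
  shows "eq_mod_Hsq H (t + t + w) g \<or> g < t + t + w"
proof (cases "eq_mod_Hsq H w g")
  case True
  then obtain l where l: "l \<in> H" "w - g = l + l" unfolding eq_mod_Hsq_def by blast
  show ?thesis
  proof (cases "t \<in> H")
    case True
    then have "t + l \<in> H" "t + t + w - g = (t + l) + (t + l)"
      using Hgrp_add l by (auto simp: algebra_simps)
    then show ?thesis unfolding eq_mod_Hsq_def by blast
  next
    case False
    then have "- l < t" using t Hgrp_less_if_not_mem Hgrp_uminus l by blast
    then have "0 < t + l" by (metis add_less_cancel_right add.left_inverse)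
    then have "0 < (t + l) + (t + l)" by simp
    then show ?thesis using l by (simp add: algebra_simps)
  qed
next
  case False
  then have gw: "g < w" using cond by blast
  show ?thesis
  proof (cases "0 \<le> t")
    case True
    then show ?thesis using add_le_less_mono[of 0 "t + t" g w] gw by simp
  next
    case neg: False
    show ?thesis
    proof (rule disjCI)
      assume "\<not> g < t + t + w"
      obtain k where k: "w - g = k + k" using sq unfolding eq_mod_sq_def by blast
      have tH: "t \<in> H" using t neg by blast
      have "0 \<le> w - g" "w - g \<le> - (t + t)" using gw \<open>\<not> g < t + t + w\<close> by (simp_all add: algebra_simps)
      then have "k + k \<in> H" using Hgrp_convex zero_in_Hgrp Hgrp_uminus Hgrp_add tH k by metis
      then have "t + k \<in> H" using Hgrp_half Hgrp_add tH by blast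
      moreover have "t + t + w - g = (t + k) + (t + k)" using k by (simp add: algebra_simps)
      ultimately show "eq_mod_Hsq H (t + t + w) g" unfolding eq_mod_Hsq_def by blast
    qed
  qed
qed

lemma eq_mod_Hsq_refl: "eq_mod_Hsq H g g"
  unfolding eq_mod_Hsq_def using zero_in_Hgrp by force

lemma eq_mod_H_or_le_if_above:
  assumes cond: "eq_mod_Hsq H u h \<or> h < u" and uw: "u < w"
  shows "eq_mod_H H h w \<or> h \<le> w"
proof (rule disjCI)
  assume "\<not> h \<le> w"
  then have "\<not> h < u" using uw by simp
  then obtain k where k: "k \<in> H" "u - h = k + k" using cond unfolding eq_mod_Hsq_def by blast
  have "0 \<le> h - w" "h - w \<le> - (k + k)" using \<open>\<not> h \<le> w\<close> k(2) uw by (simp_all add: algebra_simps)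
  then have "h - w \<in> H" using Hgrp_convex zero_in_Hgrp Hgrp_uminus Hgrp_add k(1) by metis
  then show "eq_mod_H H h w" unfolding eq_mod_H_def .
qed

end

locale pseudo_ac_field = valued_field v
  for v :: "'k::field \<Rightarrow> 'g::linordered_ab_group_add" +
  fixes res :: "'k \<Rightarrow> 'f::field" and pan :: "'k \<Rightarrow> 'f"
  assumes residue_map: "residue_map v res"
    and pseudo_ac: "pseudo_ac v res pan"
begin

lemma res_add: "x \<in> valring v \<Longrightarrow> y \<in> valring v \<Longrightarrow> res (x + y) = res x + res y"
  using residue_map unfolding residue_map_def by blast

lemma res_one: "res 1 = 1"
  using residue_map unfolding residue_map_def by blast

lemma res_eq_zero_iff: "x \<in> valring v \<Longrightarrow> res x = 0 \<longleftrightarrow> x = 0 \<or> 0 < v x"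
  using residue_map unfolding residue_map_def by blast

lemma res_minus_one: "res (- 1) = - 1"
proof -
  have "- 1 \<in> valring v" "1 \<in> valring v" unfolding valring_def by simp_all
  then have "res (- 1) + res 1 = res 0" using res_add by fastforce
  also have "\<dots> = 0" using res_eq_zero_iff[of 0] unfolding valring_def by simp
  finally show ?thesis using res_one by (simp add: eq_neg_iff_add_eq_0)
qed

lemma pan_nonzero: "x \<noteq> 0 \<Longrightarrow> pan x \<noteq> 0"
  using pseudo_ac unfolding pseudo_ac_def by blast

lemma pan_unit_mult: "u \<in> valunits v \<Longrightarrow> x \<noteq> 0 \<Longrightarrow> pan (u * x) = res u * pan x"
  using pseudo_ac unfolding pseudo_ac_def by blast

lemma pan_add_less:
  "x \<noteq> 0 \<Longrightarrow> y \<noteq> 0 \<Longrightarrow> x + y \<noteq> 0 \<Longrightarrow> v x < v y \<Longrightarrow> pan (x + y) = pan x"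
  using pseudo_ac unfolding pseudo_ac_def by blast

lemma pan_add_eq:
  "x \<noteq> 0 \<Longrightarrow> y \<noteq> 0 \<Longrightarrow> x + y \<noteq> 0 \<Longrightarrow> v x = v y \<Longrightarrow> pan x + pan y \<noteq> 0 \<Longrightarrow>
     v (x + y) = v x \<and> pan (x + y) = pan x + pan y"
  using pseudo_ac unfolding pseudo_ac_def by blast

lemma pan_eq_imp_square_multiple:
  "x \<noteq> 0 \<Longrightarrow> y \<noteq> 0 \<Longrightarrow> eq_mod_sq (v x) (v y) \<Longrightarrow> pan x = pan y \<Longrightarrow> \<exists>u. u \<noteq> 0 \<and> y = u\<^sup>2 * x"
  using pseudo_ac unfolding pseudo_ac_def by blast

lemma pan_mult_square: "a \<noteq> 0 \<Longrightarrow> u \<noteq> 0 \<Longrightarrow> \<exists>k. k \<noteq> 0 \<and> pan (a * u\<^sup>2) = pan a * k\<^sup>2"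
  using pseudo_ac unfolding pseudo_ac_def by blast

lemma pan_uminus: "x \<noteq> 0 \<Longrightarrow> pan (- x) = - pan x"
  using pan_unit_mult[of "- 1" x] res_minus_one unfolding valunits_def by simp

lemma valuation_less_add_if_pan_cancel:
  assumes x: "x \<noteq> 0" and y: "y \<noteq> 0" and vxy: "v x = v y"
    and cancel: "pan x + pan y = 0" and sum: "x + y \<noteq> 0"
  shows "v x < v (x + y)"
proof -
  have pan_y: "pan (- x) = pan y" using pan_uminus[OF x] cancel by (simp add: add_eq_0_iff)
  then obtain u where u: "u \<noteq> 0" "y = u\<^sup>2 * (- x)"
    using pan_eq_imp_square_multiple[of "- x" y] x y vxy eq_mod_sq_refl by auto
  have "v y = v u + v u + v x" using u x by (simp add: valuation_mult valuation_square)
  then have "v (u\<^sup>2) = 0" using vxy u by (simp add: valuation_square)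
  then have unit: "u\<^sup>2 \<in> valunits v" and u2: "u\<^sup>2 \<in> valring v"
    unfolding valunits_def valring_def using u by simp_all
  have "pan y = res (u\<^sup>2) * pan y" using u x pan_unit_mult[OF unit, of "- x"] pan_y by simp
  then have res_u2: "res (u\<^sup>2) = 1" using pan_nonzero[OF y] by simp
  have "1 \<in> valring v" unfolding valring_def by simp
  then have one_minus: "1 - u\<^sup>2 \<in> valring v" using valring_diff u2 by blast
  have "res (1 - u\<^sup>2) = 0" using res_add[OF one_minus u2] res_u2 res_one by simp
  moreover have xy: "x + y = (1 - u\<^sup>2) * x" using u by (simp add: algebra_simps)
  then have "1 - u\<^sup>2 \<noteq> 0" using sum by auto
  ultimately have "0 < v (1 - u\<^sup>2)" using res_eq_zero_iff[OF one_minus] by simp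
  moreover have "v (x + y) = v (1 - u\<^sup>2) + v x" using xy \<open>1 - u\<^sup>2 \<noteq> 0\<close> x valuation_mult by simp
  ultimately show ?thesis by (simp add: add_pos_nonneg[THEN less_le_trans] less_add_same_cancel2)
qed

end

locale Phi_union = valuation_overring v A + pseudo_ac_field v res pan
  for v :: "'k::field \<Rightarrow> 'g::linordered_ab_group_add"
    and A :: "'k set"
    and res :: "'k \<Rightarrow> 'f::field"
    and pan :: "'k \<Rightarrow> 'f" +
  fixes M :: "'g \<Rightarrow> 'f set"
  assumes two_nonzero: "(2::'f) \<noteq> 0"
    and M_qqm: "\<forall>g \<in> Hgrp v A \<union> {g. 0 \<le> g}. qqm UNIV (M g)"
    and M_mono: "\<forall>g \<in> Hgrp v A \<union> {g. 0 \<le> g}. \<forall>h \<in> Hgrp v A \<union> {g. 0 \<le> g}.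
                  ((g \<le> h \<and> eq_mod_sq g h) \<or>
                   (M g = UNIV \<and> (eq_mod_H (Hgrp v A) g h \<or> g \<le> h))) \<longrightarrow> M g \<subseteq> M h"
begin

abbreviation "index_set \<equiv> H \<union> {g. 0 \<le> g}"

abbreviation "Phi_Union \<equiv> \<Union>g \<in> index_set. Phi v pan A (M g) g"

lemma valuation_in_index_set: "a \<in> A \<Longrightarrow> a \<noteq> 0 \<Longrightarrow> v a \<in> index_set"
  using valuation_overring_cases by blast

lemma M_add: "g \<in> index_set \<Longrightarrow> c \<in> M g \<Longrightarrow> d \<in> M g \<Longrightarrow> c + d \<in> M g"
  using M_qqm unfolding qqm_def by blast

lemma M_square_mult: "g \<in> index_set \<Longrightarrow> c \<in> M g \<Longrightarrow> k\<^sup>2 * c \<in> M g"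
  using M_qqm unfolding qqm_def by blast

lemma M_subset:
  "g \<in> index_set \<Longrightarrow> h \<in> index_set \<Longrightarrow>
     (g \<le> h \<and> eq_mod_sq g h) \<or> (M g = UNIV \<and> (eq_mod_H H g h \<or> g \<le> h)) \<Longrightarrow> M g \<subseteq> M h"
  using M_mono by blast

lemma Phi_add_less:
  assumes x: "x \<in> Phi v pan A N g" "x \<noteq> 0" and y: "y \<in> A" "y \<noteq> 0" and less: "v x < v y"
  shows "x + y \<in> Phi v pan A N g"
proof -
  have "x + y \<noteq> 0" "v (x + y) = v x" "pan (x + y) = pan x"
    using valuation_add_less pan_add_less x(2) y(2) less by auto
  then show ?thesis using x y overring_add by (simp add: nonzero_mem_Phi_iff)
qed

lemma pan_mem_M_if_same_valuation:
  assumes g: "g \<in> index_set" "x \<in> Phi v pan A (M g) g" "x \<noteq> 0"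
    and h: "h \<in> index_set" "y \<in> Phi v pan A (M h) h" "y \<noteq> 0"
    and le: "g \<le> h" and vxy: "v x = v y"
  shows "pan x \<in> M h"
proof -
  have "eq_mod_sq (v x) g" "eq_mod_sq (v x) h" "pan x \<in> M g"
    using g h vxy by (simp_all add: nonzero_mem_Phi_iff)
  then have "eq_mod_sq g h" "pan x \<in> M g" using eq_mod_sq_sym eq_mod_sq_trans by blast+
  then show ?thesis using M_subset[OF g(1) h(1)] le by blast
qed

lemma Phi_add_noncancel:
  assumes g: "g \<in> index_set" "x \<in> Phi v pan A (M g) g" "x \<noteq> 0"
    and h: "h \<in> index_set" "y \<in> Phi v pan A (M h) h" "y \<noteq> 0"
    and le: "g \<le> h" and vxy: "v x = v y" and noncancel: "pan x + pan y \<noteq> 0"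
  shows "x + y \<in> Phi v pan A (M h) h"
proof (cases "x + y = 0")
  case False
  then have sum: "v (x + y) = v y" "pan (x + y) = pan x + pan y"
    using pan_add_eq g(3) h(3) vxy noncancel by auto
  have "pan x \<in> M h" using pan_mem_M_if_same_valuation g h le vxy .
  then have "pan (x + y) \<in> M h" using sum M_add h by (simp add: nonzero_mem_Phi_iff)
  then show ?thesis using False sum g h overring_add by (simp add: nonzero_mem_Phi_iff)
qed simp

lemma Phi_add_cancel:
  assumes g: "g \<in> index_set" "x \<in> Phi v pan A (M g) g" "x \<noteq> 0"
    and h: "h \<in> index_set" "y \<in> Phi v pan A (M h) h" "y \<noteq> 0"
    and le: "g \<le> h" and vxy: "v x = v y" and cancel: "pan x + pan y = 0"
    and sum: "x + y \<noteq> 0"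
  shows "x + y \<in> Phi v pan A (M (v (x + y))) (v (x + y))"
proof -
  have "pan x \<in> M h" using pan_mem_M_if_same_valuation g h le vxy .
  moreover have "- pan x \<in> M h"
    using h cancel by (simp add: nonzero_mem_Phi_iff add_eq_0_iff)
  ultimately have "M h = UNIV"
    using qqm_UNIV_eq_UNIV_if_uminus_mem M_qqm h(1) two_nonzero pan_nonzero g(3) by blast
  moreover have "x + y \<in> A" using g h overring_add by (simp add: nonzero_mem_Phi_iff)
  moreover have "eq_mod_H H h (v (x + y)) \<or> h \<le> v (x + y)"
  proof -
    have "v y < v (x + y)" using valuation_less_add_if_pan_cancel g(3) h(3) vxy cancel sum by simp
    moreover have "eq_mod_Hsq H (v y) h \<or> h < v y" using h by (simp add: nonzero_mem_Phi_iff)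
    ultimately show ?thesis using eq_mod_H_or_le_if_above by blast
  qed
  ultimately have "M h \<subseteq> M (v (x + y))"
    using M_subset h(1) valuation_in_index_set sum by blast
  with \<open>M h = UNIV\<close> \<open>x + y \<in> A\<close> show ?thesis
    using sum eq_mod_sq_refl eq_mod_Hsq_refl by (auto simp: nonzero_mem_Phi_iff)
qed

lemma Phi_Union_add_le:
  assumes g: "g \<in> index_set" "x \<in> Phi v pan A (M g) g" "x \<noteq> 0"
    and h: "h \<in> index_set" "y \<in> Phi v pan A (M h) h" "y \<noteq> 0"
    and le: "v x \<le> v y"
  shows "x + y \<in> Phi_Union"
proof (cases "v x < v y")
  case True
  then have "x + y \<in> Phi v pan A (M g) g" using Phi_add_less g(2,3) h by (simp add: nonzero_mem_Phi_iff)
  then show ?thesis using g(1) by blast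
next
  case False
  then have vxy: "v x = v y" using le by simp
  have noncancel: "x + y \<in> Phi_Union" if "pan x + pan y \<noteq> 0"
  proof (cases "g \<le> h")
    case True
    then show ?thesis using Phi_add_noncancel[OF g h _ vxy] that h(1) by blast
  next
    case False
    then have "x + y \<in> Phi v pan A (M g) g"
      using Phi_add_noncancel[OF h g _ vxy[symmetric]] that by (simp add: add.commute)
    then show ?thesis using g(1) by blast
  qed
  have cancel: "x + y \<in> Phi_Union" if "pan x + pan y = 0" "x + y \<noteq> 0"
  proof -
    have "x + y \<in> Phi v pan A (M (v (x + y))) (v (x + y))"
    proof (cases "g \<le> h")
      case True
      then show ?thesis using Phi_add_cancel[OF g h _ vxy] that by blast
    next
      case False
      then show ?thesis using Phi_add_cancel[OF h g _ vxy[symmetric]] that by (simp add: add.commute)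
    qed
    moreover have "v (x + y) \<in> index_set"
      using valuation_in_index_set overring_add g h that(2) by (simp add: nonzero_mem_Phi_iff)
    ultimately show ?thesis by blast
  qed
  show ?thesis using noncancel cancel g(1) by (cases "x + y = 0") auto
qed

lemma Phi_Union_add:
  assumes "x \<in> Phi_Union" "y \<in> Phi_Union"
  shows "x + y \<in> Phi_Union"
proof (cases "x = 0 \<or> y = 0")
  case False
  then obtain g h where g: "g \<in> index_set" "x \<in> Phi v pan A (M g) g" "x \<noteq> 0"
    and h: "h \<in> index_set" "y \<in> Phi v pan A (M h) h" "y \<noteq> 0"
    using assms by blast
  show ?thesis
  proof (cases "v x \<le> v y")
    case True
    then show ?thesis using Phi_Union_add_le[OF g h] by blast
  next
    case False
    then show ?thesis using Phi_Union_add_le[OF h g] by (simp add: add.commute)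
  qed
qed (use assms in auto)

lemma Phi_square_mult:
  assumes g: "g \<in> index_set" and a: "a \<in> A" and x: "x \<in> Phi v pan A (M g) g"
  shows "a\<^sup>2 * x \<in> Phi v pan A (M g) g"
proof (cases "a = 0 \<or> x = 0")
  case False
  then have nz: "a \<noteq> 0" "x \<noteq> 0" by auto
  have val: "v (a\<^sup>2 * x) = v a + v a + v x" using nz by (simp add: valuation_mult valuation_square)
  obtain k where "pan (x * a\<^sup>2) = pan x * k\<^sup>2" using pan_mult_square nz by blast
  then have "pan (a\<^sup>2 * x) \<in> M g" using M_square_mult[OF g] x nz by (simp add: nonzero_mem_Phi_iff mult.commute)
  moreover have "eq_mod_sq (v (a\<^sup>2 * x)) g"
  proof -
    obtain k where "v x - g = k + k" using x nz by (auto simp: nonzero_mem_Phi_iff eq_mod_sq_def)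
    then have "v (a\<^sup>2 * x) - g = (v a + k) + (v a + k)" using val by (simp add: algebra_simps)
    then show ?thesis unfolding eq_mod_sq_def by blast
  qed
  moreover have "eq_mod_Hsq H (v (a\<^sup>2 * x)) g \<or> g < v (a\<^sup>2 * x)"
    using Hsq_condition_shift valuation_overring_cases a nz x val by (simp add: nonzero_mem_Phi_iff)
  ultimately show ?thesis using nz a x overring_mult by (simp add: nonzero_mem_Phi_iff power2_eq_square)
qed auto

lemma Phi_Union_qqm: "qqm A Phi_Union"
  unfolding qqm_def
proof (intro conjI ballI)
  show "Phi_Union \<subseteq> A" using overring_zero by (auto simp: Phi_def)
next
  fix x y assume "x \<in> Phi_Union" "y \<in> Phi_Union"
  then show "x + y \<in> Phi_Union" by (rule Phi_Union_add)
next
  fix a x assume "a \<in> A" "x \<in> Phi_Union"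
  then show "a\<^sup>2 * x \<in> Phi_Union" using Phi_square_mult by blast
qed

end

theorem mainTheorem8:
  fixes v :: "'k::field \<Rightarrow> 'g::linordered_ab_group_add"
    and res :: "'k \<Rightarrow> 'f::field"
    and pan :: "'k \<Rightarrow> 'f"
    and A :: "'k set"
    and M :: "'g \<Rightarrow> 'f set"
  assumes val: "valuation v"
    and resm: "residue_map v res"
    and char: "(2::'f) \<noteq> 0"
    and hens: "two_henselian v res"
    and pac: "pseudo_ac v res pan"
    and subA: "subring_between v A"
    and Mqqm: "\<forall>g \<in> Hgrp v A \<union> {g. 0 \<le> g}. qqm UNIV (M g)"
    and Mmono: "\<forall>g \<in> Hgrp v A \<union> {g. 0 \<le> g}. \<forall>h \<in> Hgrp v A \<union> {g. 0 \<le> g}.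
                  ((g \<le> h \<and> eq_mod_sq g h) \<or>
                   (M g = UNIV \<and> (eq_mod_H (Hgrp v A) g h \<or> g \<le> h))) \<longrightarrow> M g \<subseteq> M h"
  shows "qqm A (\<Union>g \<in> Hgrp v A \<union> {g. 0 \<le> g}. Phi v pan A (M g) g)"
proof -
  interpret Phi_union v A res pan M
    by unfold_locales (fact val subA resm pac char Mqqm Mmono)+
  show ?thesis by (rule Phi_Union_qqm)
qed

end
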